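(* Let $x,y$ be vectors in a real Hilbert space and let $p\ge1$ be an integer. If $p$ is odd or $\langle x,y\rangle\ge0$, then $$\langle x,x\rangle^p-2\langle x,y\rangle^p+\langle y,y\rangle^p\ge\frac{1}{2^{2(p-1)}}\|x-y\|^{2p}.$$ *)

theory Defs
  imports "HOL-Analysis.Analysis"
begin

end

theory Submission
  imports Defs
begin

text \<open>
  Put \<open>m = \<parallel>x + y\<parallel>\<^sup>2 / 4\<close> and \<open>d = \<parallel>x - y\<parallel>\<^sup>2 / 4\<close>, so that
  \<open>\<langle>x, y\<rangle> = m - d\<close> and, by the parallelogram law, \<open>(\<langle>x, x\<rangle> + \<langle>y, y\<rangle>) / 2 = m + d\<close>.
  Convexity of \<open>t \<mapsto> t\<^sup>p\<close> on \<open>[0, \<infinity>)\<close> bounds the left-hand side below by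
  \<open>2 ((m + d)\<^sup>p - (m - d)\<^sup>p)\<close>, and this is at least \<open>4 d\<^sup>p\<close>: if \<open>d \<le> m\<close> by
  superadditivity of \<open>t\<^sup>p\<close>, and if \<open>m < d\<close> with \<open>p\<close> odd by convexity once more,
  since then \<open>-(m - d)\<^sup>p = (d - m)\<^sup>p\<close>. Finally \<open>4 d\<^sup>p = \<parallel>x - y\<parallel>\<^bsup>2p\<^esup> / 4\<^bsup>p-1\<^esup>\<close>.
\<close>

lemma convex_on_power_nonneg: "convex_on {0::real..} (\<lambda>x. x ^ n)"
  by (cases "even n") (auto intro: convex_on_subset[OF convex_power_even] convex_power_odd)

lemma power_midpoint_le:
  fixes u v :: real
  assumes "0 \<le> u" "0 \<le> v"
  shows "2 * ((u + v) / 2) ^ n \<le> u ^ n + v ^ n"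
  using convex_onD[OF convex_on_power_nonneg, of "1/2" u v n] assms
  by (simp add: field_simps)

lemma add_powers_le_power_add:
  fixes u v :: real
  assumes "0 \<le> u" "0 \<le> v" "1 \<le> n"
  shows "u ^ n + v ^ n \<le> (u + v) ^ n"
  using assms(3)
proof (induction n rule: dec_induct)
  case base
  then show ?case by simp
next
  case (step n)
  have "u ^ Suc n + v ^ Suc n \<le> (u + v) * (u ^ n + v ^ n)"
    using assms by (simp add: algebra_simps)
  also have "\<dots> \<le> (u + v) * (u + v) ^ n"
    using step.IH assms by (simp add: mult_left_mono)
  finally show ?case by simp
qed

lemma double_power_le_power_add_minus_power_diff:
  fixes m d :: real
  assumes "0 \<le> m" "0 \<le> d" "1 \<le> n" "odd n \<or> d \<le> m"
  shows "2 * d ^ n \<le> (m + d) ^ n - (m - d) ^ n"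
proof (cases "d \<le> m")
  case True
  have "2 * d ^ n \<le> (2 * d) ^ n"
    using \<open>0 \<le> d\<close> \<open>1 \<le> n\<close> self_le_power[of "2::real" n]
    by (simp add: power_mult_distrib mult_right_mono)
  also have "\<dots> \<le> (m + d) ^ n - (m - d) ^ n"
    using add_powers_le_power_add[of "m - d" "2 * d" n] True assms by (simp add: add.commute)
  finally show ?thesis .
next
  case False
  with assms have "odd n" by simp
  then have "(m - d) ^ n = - ((d - m) ^ n)"
    by (metis minus_diff_eq power_minus_odd)
  moreover have "2 * d ^ n \<le> (d + m) ^ n + (d - m) ^ n"
    using power_midpoint_le[of "d + m" "d - m" n] False assms by simp
  ultimately show ?thesis by (simp add: add.commute)
qed

theorem lemma4:
  fixes x y :: "'a :: {real_inner, complete_space}" and p :: nat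
  assumes "p \<ge> 1"
    and "odd p \<or> inner x y \<ge> 0"
  shows "(inner x x) ^ p - 2 * (inner x y) ^ p + (inner y y) ^ p
           \<ge> (1 / 2 ^ (2 * (p - 1))) * norm (x - y) ^ (2 * p)"
proof -
  define m where "m = norm (x + y) ^ 2 / 4"
  define d where "d = norm (x - y) ^ 2 / 4"
  have mean: "(inner x x + inner y y) / 2 = m + d" and inner_xy: "inner x y = m - d"
    by (simp_all add: m_def d_def power2_norm_eq_inner inner_add inner_diff inner_commute field_simps)
  have "2 * d ^ p \<le> (m + d) ^ p - (m - d) ^ p"
    using double_power_le_power_add_minus_power_diff[of m d p] assms inner_xy
    by (simp add: m_def d_def)
  moreover have "2 * (m + d) ^ p \<le> inner x x ^ p + inner y y ^ p"
    using power_midpoint_le[of "inner x x" "inner y y" p] mean by simp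
  moreover have "norm (x - y) ^ (2 * p) = 4 * 2 ^ (2 * (p - 1)) * d ^ p"
  proof -
    have "norm (x - y) ^ (2 * p) = (4 * d) ^ p"
      by (simp add: d_def power_mult)
    also have "\<dots> = 4 * 4 ^ (p - 1) * d ^ p"
      using \<open>p \<ge> 1\<close> by (simp add: power_mult_distrib power_Suc[symmetric])
    finally show ?thesis
      by (simp add: power_mult)
  qed
  ultimately show ?thesis
    unfolding inner_xy by (simp add: field_simps)
qed

end
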